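(* Let $A\in\mathbb{R}^{n\times n}$ be the weighted adjacency matrix of a strongly connected weighted directed graph on $\{1,\ldots,n\}$, let $P=D_{out}^{-1}A$, $Q=D_{in}^{-1}A^T$, let $\beta\in\mathbb{R}$, and for $\ell\ge1$ let $S^{(\ell)}=2^{-\ell}\sum_{|\Psi|=\ell}\Psi(P,Q)\Psi(P,Q)^T$. For $k\ge1$ let $S_k=\sum_{\ell=1}^k\beta^{2\ell-2}S^{(\ell)}$, so that $S_1=\tfrac12(PP^T+QQ^T)$. Then for every $k\ge2$, $$S_k=S_1+\frac{\beta^2}{2}\big(PS_{k-1}P^T+QS_{k-1}Q^T\big).$$
   Context: The graph has node set $\{1,\ldots,n\}$; $A_{ij}>0$ is the weight of the link $i\to j$ and $A_{ij}=0$ if there is no such link; strong connectivity means every node can reach every other node by a directed walk. $D_{out}=\mathrm{Diag}(\sum_j A_{1j},\ldots,\sum_j A_{nj})$ and $D_{in}=\mathrm{Diag}(\sum_j A_{j1},\ldots,\sum_j A_{jn})$. A walk pattern is a nonempty finite sequence $\Psi=\psi_1\cdots\psi_\ell$ with $\psi_k\in\{d,r\}$, $|\Psi|=\ell$; for $M,N\in\mathbb{R}^{n\times n}$, $\Psi(M,N)=X_1\cdots X_\ell$ with $X_k=M$ if $\psi_k=d$, $X_k=N$ if $\psi_k=r$. The sum $\sum_{|\Psi|=\ell}$ runs over all $2^\ell$ patterns of length $\ell$. *)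

theory Defs
  imports "HOL-Analysis.Analysis"
begin

datatype wletter = Dl | Rl

fun pat_eval :: "wletter list \<Rightarrow> real^'n^'n \<Rightarrow> real^'n^'n \<Rightarrow> real^'n^'n" where
  "pat_eval [] M N = mat 1"
| "pat_eval (x # xs) M N = (if x = Dl then M else N) ** pat_eval xs M N"

definition patterns :: "nat \<Rightarrow> wletter list set" where
  "patterns l = {xs. length xs = l}"

definition nonneg_weights :: "real^'n^'n \<Rightarrow> bool" where
  "nonneg_weights A \<longleftrightarrow> (\<forall>i j. A$i$j \<ge> 0)"

definition strongly_connected :: "real^'n^'n \<Rightarrow> bool" where
  "strongly_connected A \<longleftrightarrow> (\<forall>i j. (i, j) \<in> {(a, b). A$a$b > 0}\<^sup>*)"

definition D_out :: "real^'n^'n \<Rightarrow> real^'n^'n" where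
  "D_out A = (\<chi> i j. if i = j then (\<Sum>k\<in>UNIV. A$i$k) else 0)"

definition D_in :: "real^'n^'n \<Rightarrow> real^'n^'n" where
  "D_in A = (\<chi> i j. if i = j then (\<Sum>k\<in>UNIV. A$k$i) else 0)"

definition S_level :: "real^'n^'n \<Rightarrow> real^'n^'n \<Rightarrow> nat \<Rightarrow> real^'n^'n" where
  "S_level P Q l = (1 / 2 ^ l) *\<^sub>R
     (\<Sum>\<Psi>\<in>patterns l. pat_eval \<Psi> P Q ** transpose (pat_eval \<Psi> P Q))"

definition S_sum :: "real \<Rightarrow> real^'n^'n \<Rightarrow> real^'n^'n \<Rightarrow> nat \<Rightarrow> real^'n^'n" where
  "S_sum \<beta> P Q k = (\<Sum>l = 1..k. (\<beta> ^ (2 * l - 2)) *\<^sub>R S_level P Q l)"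

end

theory Submission
  imports Defs
begin

text \<open>Splitting a pattern of length l+1 by its first letter gives the one-step recursion
  S^(l+1) = (P S^(l) P^T + Q S^(l) Q^T) / 2; summing it against the weights beta^(2l-2)
  yields the recursion for S_k. The identity holds for arbitrary square matrices P and Q.\<close>

lemma matrix_add_rdistrib: "(B + C) ** A = B ** A + C ** A"
  by (vector matrix_matrix_mult_def sum.distrib[symmetric] field_simps)

lemma matrix_mul_sum_left: "(\<Sum>x\<in>S. f x) ** A = (\<Sum>x\<in>S. f x ** A)"
  by (induction S rule: infinite_finite_induct) (simp_all add: matrix_add_rdistrib)

lemma matrix_mul_sum_right: "A ** (\<Sum>x\<in>S. f x) = (\<Sum>x\<in>S. A ** f x)"
  by (induction S rule: infinite_finite_induct) (simp_all add: matrix_add_ldistrib)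

lemma finite_patterns: "finite (patterns l)"
proof -
  have letters: "(UNIV :: wletter set) = {Dl, Rl}"
    using wletter.exhaust by auto
  have "finite (UNIV :: wletter set)"
    by (simp add: letters)
  then show ?thesis
    unfolding patterns_def using finite_lists_length_eq[of "UNIV :: wletter set" l] by simp
qed

lemma patterns_Suc: "patterns (Suc l) = Cons Dl ` patterns l \<union> Cons Rl ` patterns l"
proof (intro set_eqI iffI)
  fix xs assume "xs \<in> patterns (Suc l)"
  then obtain y ys where "xs = y # ys" "ys \<in> patterns l"
    unfolding patterns_def by (cases xs) auto
  then show "xs \<in> Cons Dl ` patterns l \<union> Cons Rl ` patterns l"
    by (cases y) simp_all
next
  fix xs assume "xs \<in> Cons Dl ` patterns l \<union> Cons Rl ` patterns l"
  then show "xs \<in> patterns (Suc l)" unfolding patterns_def by auto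
qed

lemma S_level_Suc:
  "S_level P Q (Suc l) =
     (1/2) *\<^sub>R (P ** S_level P Q l ** transpose P + Q ** S_level P Q l ** transpose Q)"
proof -
  let ?g = "\<lambda>\<Psi>. pat_eval \<Psi> P Q ** transpose (pat_eval \<Psi> P Q)"
  have prefix: "(\<Sum>\<Psi>\<in>Cons a ` patterns l. ?g \<Psi>) =
      (if a = Dl then P else Q) ** (\<Sum>\<Psi>\<in>patterns l. ?g \<Psi>) ** transpose (if a = Dl then P else Q)"
    for a
    by (simp add: sum.reindex matrix_mul_sum_left matrix_mul_sum_right
        matrix_transpose_mul matrix_mul_assoc)
  have "(\<Sum>\<Psi>\<in>patterns (Suc l). ?g \<Psi>) =
        (\<Sum>\<Psi>\<in>Cons Dl ` patterns l. ?g \<Psi>) + (\<Sum>\<Psi>\<in>Cons Rl ` patterns l. ?g \<Psi>)"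
    unfolding patterns_Suc by (rule sum.union_disjoint) (auto simp: finite_patterns)
  then show ?thesis
    unfolding S_level_def prefix
    by (simp add: matrix_scalar_ac scalar_matrix_assoc scaleR_right_distrib)
qed

lemma S_sum_Suc:
  "S_sum \<beta> P Q (Suc m) = S_level P Q 1
     + (\<beta>\<^sup>2 / 2) *\<^sub>R (P ** S_sum \<beta> P Q m ** transpose P + Q ** S_sum \<beta> P Q m ** transpose Q)"
proof -
  have weight: "\<beta> ^ (2 * l) = \<beta>\<^sup>2 * \<beta> ^ (2 * l - 2)" if "l \<ge> 1" for l
    using that by (cases l) (simp_all add: power2_eq_square)
  have "S_sum \<beta> P Q (Suc m) =
        S_level P Q 1 + (\<Sum>l = Suc 1..Suc m. (\<beta> ^ (2 * l - 2)) *\<^sub>R S_level P Q l)"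
    unfolding S_sum_def by (subst sum.atLeast_Suc_atMost) auto
  also have "(\<Sum>l = Suc 1..Suc m. (\<beta> ^ (2 * l - 2)) *\<^sub>R S_level P Q l) =
      (\<Sum>l = 1..m. (\<beta> ^ (2 * Suc l - 2)) *\<^sub>R S_level P Q (Suc l))"
    by (rule sum.shift_bounds_cl_Suc_ivl)
  also have "\<dots> = (\<beta>\<^sup>2 / 2) *\<^sub>R (\<Sum>l = 1..m. (\<beta> ^ (2 * l - 2)) *\<^sub>R
      (P ** S_level P Q l ** transpose P + Q ** S_level P Q l ** transpose Q))"
    unfolding scaleR_sum_right by (rule sum.cong) (auto simp: S_level_Suc weight)
  also have "\<dots> = (\<beta>\<^sup>2 / 2) *\<^sub>R
      (P ** S_sum \<beta> P Q m ** transpose P + Q ** S_sum \<beta> P Q m ** transpose Q)"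
    by (simp add: S_sum_def matrix_mul_sum_left matrix_mul_sum_right sum.distrib
        matrix_scalar_ac scalar_matrix_assoc scaleR_right_distrib)
  finally show ?thesis .
qed

theorem lemma2:
  fixes A :: "real^'n^'n" and \<beta> :: real and k :: nat
  assumes "nonneg_weights A"
    and "strongly_connected A"
    and "P = matrix_inv (D_out A) ** A"
    and "Q = matrix_inv (D_in A) ** transpose A"
    and "k \<ge> 2"
  shows "S_sum \<beta> P Q k = S_sum \<beta> P Q 1
           + (\<beta>\<^sup>2 / 2) *\<^sub>R (P ** S_sum \<beta> P Q (k - 1) ** transpose P
                              + Q ** S_sum \<beta> P Q (k - 1) ** transpose Q)"
proof -
  obtain m where "k = Suc m" using \<open>k \<ge> 2\<close> by (cases k) auto
  moreover have "S_sum \<beta> P Q 1 = S_level P Q 1"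
    by (simp add: S_sum_def)
  ultimately show ?thesis
    by (simp add: S_sum_Suc)
qed

end
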